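(* Let $k\geqslant 5$. There exists a non-decreasing function $f:\mathbb{N}\to\mathbb{N}$ with $n\leqslant f(n)\leqslant R(K_n^{(k)})$ for all $n$, such that for all $c,C>0$ and any $n_0$, there is an $n>n_0$ such that $$R(H)\leqslant c f(n)\quad\text{or}\quad R(H)\geqslant C f(n)$$ for every $k$-graph $H$ on $n$ vertices.
   Context: A $k$-graph is a pair $H=(V,E)$ where every edge $e\in E$ is a $k$-element subset of the vertex set $V$. $K_n^{(k)}$ is the $k$-graph on $n$ vertices in which every $k$-element subset of vertices is an edge. For a $k$-graph $H$, the Ramsey number $R(H)$ is the smallest integer $N$ such that every red-blue colouring of the edges of $K_N^{(k)}$ contains a copy of $H$ all of whose edges have the same colour. *)

theory Defs
  imports Complex_Main
begin

definition kgraph :: "nat \<Rightarrow> nat \<Rightarrow> nat set set \<Rightarrow> bool" where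
  "kgraph k n E \<longleftrightarrow> E \<subseteq> {e. e \<subseteq> {0..<n} \<and> card e = k}"

definition complete_kgraph :: "nat \<Rightarrow> nat \<Rightarrow> nat set set" where
  "complete_kgraph k n = {e. e \<subseteq> {0..<n} \<and> card e = k}"

definition has_mono_copy :: "nat \<Rightarrow> nat set set \<Rightarrow> nat \<Rightarrow> (nat set \<Rightarrow> bool) \<Rightarrow> bool" where
  "has_mono_copy n E N chi \<longleftrightarrow>
     (\<exists>\<phi>. inj_on \<phi> {0..<n} \<and> \<phi> ` {0..<n} \<subseteq> {0..<N} \<and>
          ((\<forall>e\<in>E. chi (\<phi> ` e)) \<or> (\<forall>e\<in>E. \<not> chi (\<phi> ` e))))"

definition ramsey_number :: "nat \<Rightarrow> nat \<Rightarrow> nat set set \<Rightarrow> nat" where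
  "ramsey_number k n E =
     (LEAST N. \<forall>chi :: nat set \<Rightarrow> bool. has_mono_copy n E N chi)"

end

(* The Ramsey numbers of the k-graphs on n vertices take at most s = 2^(n choose k) distinct
   values.  Among the s + 1 disjoint intervals [a L^(2i), a L^(2i+2)), i <= s, one therefore
   contains none of them, and its geometric midpoint g = a L^(2i+1) separates them: each is at most
   g / L or at least g L.  This g lies between a and R(K_n^(k)) once R(K_n^(k)) >= a L^(2s+2), and
   for k >= 5 that happens for infinitely many n: the random colouring bound for graphs, lifted to
   triple systems by adding a vertex and then twice by the Erdos-Hajnal stepping-up lemma, gives
   R(K_n^(k)) > 2^2^2^t for n = 16 t + k - 3.  The function f finally interpolates monotonically
   between such gaps g for the factors L = 1, 2, 3, ... at an increasing sequence of n. *)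
theory Submission
  imports Defs "HOL-Library.Ramsey" "HOL-Library.Nat_Bijection" "HOL-Real_Asymp.Real_Asymp"
begin

section \<open>Monotone runs\<close>

lemma monotone_on_atLeastLessThan_iff:
  fixes d :: "nat \<Rightarrow> 'a"
  assumes "transp R"
  shows "monotone_on {a..<b} (<) R d \<longleftrightarrow> (\<forall>i. a \<le> i \<longrightarrow> Suc i < b \<longrightarrow> R (d i) (d (Suc i)))"
proof
  assume step: "\<forall>i. a \<le> i \<longrightarrow> Suc i < b \<longrightarrow> R (d i) (d (Suc i))"
  have "R (d i) (d j)" if "a \<le> i" "i < j" "j < b" for i j
    using that
  proof (induction j rule: less_induct)
    case (less j)
    show ?case
    proof (cases "Suc i = j")
      case True
      then show ?thesis using step less.prems by auto
    next
      case False
      then have "R (d i) (d (j - 1))" "R (d (j - 1)) (d j)"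
        using less step by (auto dest: spec[of _ "j - 1"])
      then show ?thesis by (rule transpD[OF \<open>transp R\<close>])
    qed
  qed
  then show "monotone_on {a..<b} (<) R d" by (auto intro: monotone_onI)
qed (simp add: monotone_on_def)

lemma monotone_on_shift:
  fixes d :: "nat \<Rightarrow> 'a"
  shows "monotone_on {..<k} (<) R (\<lambda>l. d (j + l)) \<longleftrightarrow> monotone_on {j..<j + k} (<) R d"
proof
  assume mono: "monotone_on {..<k} (<) R (\<lambda>l. d (j + l))"
  show "monotone_on {j..<j + k} (<) R d"
  proof (rule monotone_onI)
    fix a b assume "a \<in> {j..<j + k}" "b \<in> {j..<j + k}" "a < b"
    then show "R (d a) (d b)"
      using monotone_onD[OF mono, of "a - j" "b - j"] by simp
  qed
next
  assume mono: "monotone_on {j..<j + k} (<) R d"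
  show "monotone_on {..<k} (<) R (\<lambda>l. d (j + l))"
    by (rule monotone_onI) (use monotone_onD[OF mono] in simp)
qed

definition strictly_monotone_on :: "nat set \<Rightarrow> (nat \<Rightarrow> 'a::linorder) \<Rightarrow> bool" where
  "strictly_monotone_on A d \<longleftrightarrow> strict_mono_on A d \<or> strict_antimono_on A d"

lemma strictly_monotone_on_imp_inj_on:
  fixes d :: "nat \<Rightarrow> 'a::linorder"
  shows "strictly_monotone_on A d \<Longrightarrow> inj_on d A"
  unfolding strictly_monotone_on_def
  using strict_mono_iff_mono strict_antimono_iff_antimono by blast

lemma strictly_monotone_on_comp:
  assumes "strictly_monotone_on A d" "strict_mono_on B j" "j ` B \<subseteq> A"
  shows "strictly_monotone_on B (d \<circ> j)"
proof -
  have "monotone_on B (<) R (d \<circ> j)" if "monotone_on A (<) R d" for R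
    using that assms(2,3) by (rule monotone_on_o)
  then show ?thesis using assms(1) unfolding strictly_monotone_on_def by blast
qed

lemma strictly_monotone_on_neg_int:
  "strictly_monotone_on A (\<lambda>i. - int (d i)) \<longleftrightarrow> strictly_monotone_on A d"
  by (auto simp: strictly_monotone_on_def monotone_on_def)

text \<open>A window starting with a descent is neither increasing nor, by hypothesis, non-monotone,
  so it decreases; for \<open>w \<ge> 3\<close> the next window then starts with a descent as well.\<close>

lemma strict_antimono_on_after_descent:
  fixes d :: "nat \<Rightarrow> 'a::linorder"
  assumes "3 \<le> w"
    and window: "\<And>j. j + w \<le> N \<Longrightarrow> strictly_monotone_on {j..<j + w} d \<or> d j < d (Suc j)"
    and "d (Suc j0) < d j0" "j0 + w \<le> N"
  shows "strict_antimono_on {j0..<N} d"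
proof -
  have descent_window: "strict_antimono_on {j..<j + w} d" if "d (Suc j) < d j" "j + w \<le> N" for j
  proof -
    have "\<not> strict_mono_on {j..<j + w} d"
    proof
      assume "strict_mono_on {j..<j + w} d"
      then have "d j < d (Suc j)" by (rule strict_mono_onD) (use \<open>3 \<le> w\<close> in auto)
      then show False using that(1) by simp
    qed
    then show ?thesis
      using window[OF that(2)] that(1) by (auto simp: strictly_monotone_on_def)
  qed
  have windows: "strict_antimono_on {j..<j + w} d" if "j0 \<le> j" "j + w \<le> N" for j
    using that
  proof (induction j rule: dec_induct)
    case base
    show ?case using assms(3,4) by (rule descent_window)
  next
    case (step j)
    then have "d (Suc (Suc j)) < d (Suc j)"
      using \<open>3 \<le> w\<close> by (auto simp: monotone_on_def)
    then show ?case using step.prems by (intro descent_window) auto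
  qed
  have "d (Suc i) < d i" if "j0 \<le> i" "Suc i < N" for i
  proof -
    define q where "q = min i (N - w)"
    have "strict_antimono_on {q..<q + w} d"
      using that assms(4) by (intro windows) (auto simp: q_def)
    moreover have "i \<in> {q..<q + w}" "Suc i \<in> {q..<q + w}"
      using that \<open>3 \<le> w\<close> by (auto simp: q_def)
    ultimately show ?thesis by (auto simp: monotone_on_def)
  qed
  then show ?thesis
    by (subst monotone_on_atLeastLessThan_iff) (auto intro: transpI)
qed

lemma long_monotone_run_ascending:
  fixes d :: "nat \<Rightarrow> 'a::linorder"
  assumes "3 \<le> w" "n + w \<le> N + 2" "2 * n \<le> N + 2"
    and distinct: "\<And>i. Suc i < N \<Longrightarrow> d i \<noteq> d (Suc i)"
    and window: "\<And>j. j + w \<le> N \<Longrightarrow> strictly_monotone_on {j..<j + w} d \<or> d j < d (Suc j)"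
  shows "\<exists>p. p + n \<le> N \<and> strictly_monotone_on {p..<p + n} d"
proof (cases "\<exists>i. Suc i < N \<and> d (Suc i) < d i")
  case False
  then have "strict_mono_on {0..<N} d"
    using distinct by (subst monotone_on_atLeastLessThan_iff) (auto intro: transpI simp: neq_iff)
  then have "strict_mono_on {0..<0 + n} d"
    by (rule monotone_on_subset) (use assms(1,2) in auto)
  then show ?thesis
    using assms(1,2) by (intro exI[of _ 0]) (simp add: strictly_monotone_on_def)
next
  case True
  define j0 where "j0 = (LEAST i. Suc i < N \<and> d (Suc i) < d i)"
  have j0: "Suc j0 < N" "d (Suc j0) < d j0"
    using LeastI_ex[OF True] unfolding j0_def by auto
  have "d i < d (Suc i)" if "i < j0" for i
    using not_less_Least[of i "\<lambda>i. Suc i < N \<and> d (Suc i) < d i"] distinct[of i] that j0(1)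
    unfolding j0_def[symmetric] by (auto simp: neq_iff)
  then have "strict_mono_on {0..<Suc j0} d"
    by (subst monotone_on_atLeastLessThan_iff) (auto intro: transpI)
  show ?thesis
  proof (cases "n \<le> Suc j0")
    case True
    with \<open>strict_mono_on {0..<Suc j0} d\<close> have "strict_mono_on {0..<0 + n} d"
      by (auto elim: monotone_on_subset)
    then show ?thesis
      using True j0(1) by (intro exI[of _ 0]) (simp add: strictly_monotone_on_def)
  next
    case False
    then have "strict_antimono_on {j0..<N} d"
      using assms j0(2) by (intro strict_antimono_on_after_descent[OF assms(1) window]) auto
    then have "strict_antimono_on {j0..<j0 + n} d"
      by (rule monotone_on_subset) (use False assms(3) in auto)
    then show ?thesis
      using False assms(3) by (intro exI[of _ j0]) (simp add: strictly_monotone_on_def)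
  qed
qed

lemma long_monotone_run:
  fixes d :: "nat \<Rightarrow> nat"
  assumes "3 \<le> w" "n + w \<le> N + 2" "2 * n \<le> N + 2"
    and distinct: "\<And>i. Suc i < N \<Longrightarrow> d i \<noteq> d (Suc i)"
    and window: "\<And>j. j + w \<le> N \<Longrightarrow> strictly_monotone_on {j..<j + w} d \<or> (d j < d (Suc j) \<longleftrightarrow> b)"
  shows "\<exists>p. p + n \<le> N \<and> strictly_monotone_on {p..<p + n} d"
proof (cases b)
  case True
  then show ?thesis
    using long_monotone_run_ascending[of w n N d, OF assms(1-4)] window by blast
next
  case False
  have "\<exists>p. p + n \<le> N \<and> strictly_monotone_on {p..<p + n} (\<lambda>i. - int (d i))"
  proof (rule long_monotone_run_ascending[OF assms(1-3)])
    show "- int (d i) \<noteq> - int (d (Suc i))" if "Suc i < N" for i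
      using distinct[OF that] by simp
    show "strictly_monotone_on {j..<j + w} (\<lambda>i. - int (d i)) \<or> - int (d j) < - int (d (Suc j))"
      if "j + w \<le> N" for j
      using window[OF that] distinct[of j] that False assms(1)
      by (auto simp: strictly_monotone_on_neg_int)
  qed
  then show ?thesis by (simp add: strictly_monotone_on_neg_int)
qed

section \<open>The most significant differing bit\<close>

definition nth_least :: "nat set \<Rightarrow> nat \<Rightarrow> nat" where
  "nth_least A l = sorted_list_of_set A ! l"

lemma nth_least_image:
  assumes "strict_mono_on {..<N} g" "l < N"
  shows "nth_least (g ` {..<N}) l = g l"
proof -
  have "sorted_wrt (<) (map g [0..<N])"
    using assms(1) by (auto simp: sorted_wrt_iff_nth_less strict_mono_on_def)
  moreover have "length (map g [0..<N]) = card (g ` {..<N})"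
    using strict_mono_on_imp_inj_on[OF assms(1)] by (simp add: card_image)
  ultimately have "sorted_list_of_set (g ` {..<N}) = map g [0..<N]"
    by (subst sorted_list_of_set_unique[symmetric]) (auto simp: atLeast0LessThan)
  then show ?thesis using assms(2) by (simp add: nth_least_def)
qed

lemma nth_least_strict_mono_on:
  assumes "finite A"
  shows "strict_mono_on {..<card A} (nth_least A)"
  using assms sorted_wrt_nth_less[of "(<)" "sorted_list_of_set A"]
  by (auto intro!: strict_mono_onI simp: nth_least_def)

lemma image_nth_least:
  assumes "finite A"
  shows "nth_least A ` {..<card A} = A"
  using assms unfolding nth_least_def
  by (metis atLeast0LessThan image_set length_sorted_list_of_set map_nth
      set_sorted_list_of_set set_upt)

text \<open>For \<open>a \<noteq> b\<close> this is the position of the most significant bit in which \<open>a\<close> and \<open>b\<close>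
  differ, the \<open>\<delta>(a, b)\<close> of the stepping-up lemma; \<open>top_diff_bit a a = 0\<close>.\<close>

definition top_diff_bit :: "nat \<Rightarrow> nat \<Rightarrow> nat" where
  "top_diff_bit a b = (LEAST i. a div 2 ^ Suc i = b div 2 ^ Suc i)"

lemma div_power_eq_mono:
  assumes "(a::nat) div 2 ^ i = b div 2 ^ i" "i \<le> j"
  shows "a div 2 ^ j = b div 2 ^ j"
proof -
  have "(2::nat) ^ j = 2 ^ i * 2 ^ (j - i)" using assms(2) by (simp flip: power_add)
  then show ?thesis using assms(1) by (simp add: div_mult2_eq)
qed

lemma top_diff_bit_le_iff: "top_diff_bit a b \<le> l \<longleftrightarrow> a div 2 ^ Suc l = b div 2 ^ Suc l"
proof
  have "a < 2 ^ Suc (a + b)" "b < 2 ^ Suc (a + b)"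
    using less_exp[of "a + b"] unfolding power_Suc by linarith+
  then have "\<exists>i. a div 2 ^ Suc i = b div 2 ^ Suc i"
    by (intro exI[of _ "a + b"]) (simp only: div_less)
  then have "a div 2 ^ Suc (top_diff_bit a b) = b div 2 ^ Suc (top_diff_bit a b)"
    unfolding top_diff_bit_def by (rule LeastI_ex)
  then show "top_diff_bit a b \<le> l \<Longrightarrow> a div 2 ^ Suc l = b div 2 ^ Suc l"
    by (rule div_power_eq_mono) simp
qed (simp add: top_diff_bit_def Least_le)

lemma top_diff_bit_max:
  assumes "(a::nat) \<le> b" "b \<le> c"
  shows "top_diff_bit a c = max (top_diff_bit a b) (top_diff_bit b c)"
proof -
  have "top_diff_bit a c \<le> l \<longleftrightarrow> max (top_diff_bit a b) (top_diff_bit b c) \<le> l" for l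
    using div_le_mono[OF assms(1), of "2 ^ Suc l"] div_le_mono[OF assms(2), of "2 ^ Suc l"]
    by (auto simp: top_diff_bit_le_iff)
  then show ?thesis by (meson le_antisym order_refl)
qed

lemma top_diff_bit_parity:
  assumes "a < b"
  shows "even (a div 2 ^ top_diff_bit a b)" "odd (b div 2 ^ top_diff_bit a b)"
proof -
  let ?i = "top_diff_bit a b"
  have halves: "even p \<and> odd q" if "p div 2 = q div 2" "p \<noteq> q" "p \<le> q" for p q :: nat
    using that by presburger
  have "a div 2 ^ ?i \<noteq> b div 2 ^ ?i"
  proof (cases ?i)
    case 0
    then show ?thesis using assms by simp
  next
    case (Suc j)
    then show ?thesis using top_diff_bit_le_iff[of a b j] by simp
  qed
  moreover have "a div 2 ^ ?i \<le> b div 2 ^ ?i" using assms by (simp add: div_le_mono)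
  moreover have "a div 2 ^ ?i div 2 = b div 2 ^ ?i div 2"
    using top_diff_bit_le_iff[of a b ?i] by (simp flip: div_mult2_eq power_Suc2)
  ultimately show "even (a div 2 ^ ?i)" "odd (b div 2 ^ ?i)" using halves by blast+
qed

lemma top_diff_bit_neq:
  assumes "(a::nat) < b" "b < c"
  shows "top_diff_bit a b \<noteq> top_diff_bit b c"
proof
  assume "top_diff_bit a b = top_diff_bit b c"
  then show False
    using top_diff_bit_parity(2)[OF assms(1)] top_diff_bit_parity(1)[OF assms(2)] by simp
qed

lemma top_diff_bit_less:
  assumes "a < 2 ^ m" "b < 2 ^ m" "a \<noteq> b"
  shows "top_diff_bit a b < m"
proof (cases m)
  case 0
  then show ?thesis using assms by simp
next
  case (Suc m')
  then show ?thesis using assms top_diff_bit_le_iff[of a b m'] by simp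
qed

lemma top_diff_bit_eq_Max:
  assumes "strict_mono_on {a..b} x" "a < b"
  shows "top_diff_bit (x a) (x b) = Max ((\<lambda>i. top_diff_bit (x i) (x (Suc i))) ` {a..<b})"
  using assms
proof (induction b)
  case (Suc b)
  let ?d = "\<lambda>i. top_diff_bit (x i) (x (Suc i))"
  show ?case
  proof (cases "a = b")
    case False
    then have "a < b" using Suc by simp
    have "strict_mono_on {a..b} x" using Suc.prems(1) by (rule monotone_on_subset) auto
    then have IH: "top_diff_bit (x a) (x b) = Max (?d ` {a..<b})"
      using Suc.IH \<open>a < b\<close> by blast
    have "x a \<le> x b" "x b \<le> x (Suc b)"
      using Suc.prems \<open>a < b\<close> by (auto simp: strict_mono_on_def intro: less_imp_le)
    then have "top_diff_bit (x a) (x (Suc b)) = max (top_diff_bit (x a) (x b)) (?d b)"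
      by (rule top_diff_bit_max)
    also have "\<dots> = max (Max (?d ` {a..<b})) (?d b)"
      by (simp only: IH)
    also have "\<dots> = Max (?d ` {a..<Suc b})"
      using \<open>a < b\<close> by (simp add: atLeastLessThanSuc max.commute)
    finally show ?thesis .
  qed simp
qed simp

lemma top_diff_bit_at_peak:
  assumes "strict_mono_on {a..b} x" "a \<le> c" "c < b"
    and peak: "\<And>i. a \<le> i \<Longrightarrow> i < b \<Longrightarrow>
      top_diff_bit (x i) (x (Suc i)) \<le> top_diff_bit (x c) (x (Suc c))"
  shows "top_diff_bit (x a) (x b) = top_diff_bit (x c) (x (Suc c))"
proof -
  have "top_diff_bit (x a) (x b) = Max ((\<lambda>i. top_diff_bit (x i) (x (Suc i))) ` {a..<b})"
    using assms(1-3) by (intro top_diff_bit_eq_Max) auto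
  also have "\<dots> = top_diff_bit (x c) (x (Suc c))"
    using assms by (intro Max_eqI) auto
  finally show ?thesis .
qed

text \<open>Vertex indices \<open>h 0 < \<dots> < h k\<close> whose \<open>l\<close>-th gap \<open>[h l, h (l + 1))\<close> contains a
  maximum \<open>c l\<close> of \<open>d\<close> on it; for the sequence of consecutive \<open>\<delta>\<close>'s this makes
  \<open>\<delta>(x (h l), x (h (l + 1))) = d (c l)\<close> by \<open>top_diff_bit_eq_Max\<close>.\<close>

definition separates_peaks ::
    "nat \<Rightarrow> nat \<Rightarrow> (nat \<Rightarrow> 'a::linorder) \<Rightarrow> (nat \<Rightarrow> nat) \<Rightarrow> (nat \<Rightarrow> nat) \<Rightarrow> bool"
  where "separates_peaks k q d c h \<longleftrightarrow>
    (\<forall>l < k. h l \<le> c l \<and> c l < h (Suc l) \<and> h (Suc l) \<le> q) \<and>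
    (\<forall>l i. l < k \<longrightarrow> h l \<le> i \<longrightarrow> i < h (Suc l) \<longrightarrow> d i \<le> d (c l))"

lemma top_diff_bit_separated_peaks:
  fixes x h c :: "nat \<Rightarrow> nat"
  defines "d \<equiv> \<lambda>i. top_diff_bit (x i) (x (Suc i))"
  assumes x: "strict_mono_on {..<r} x" "q < r" and "0 < k" and sep: "separates_peaks k q d c h"
  shows "strict_mono_on {..<Suc k} h" "h ` {..<Suc k} \<subseteq> {..<r}"
    and "\<And>l. l < k \<Longrightarrow> top_diff_bit (x (h l)) (x (h (Suc l))) = d (c l)"
proof -
  have gaps: "h l \<le> c l \<and> c l < h (Suc l) \<and> h (Suc l) < r" if "l < k" for l
    using sep that x(2) unfolding separates_peaks_def by fastforce
  have "h l < h (Suc l)" if "l < k" for l using gaps[OF that] by linarith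
  then show "strict_mono_on {..<Suc k} h"
    unfolding lessThan_atLeast0 by (subst monotone_on_atLeastLessThan_iff) simp_all
  have "h 0 < r" using gaps[OF \<open>0 < k\<close>] by linarith
  then show "h ` {..<Suc k} \<subseteq> {..<r}"
    using gaps by (auto simp: less_Suc_eq_0_disj)
  show "top_diff_bit (x (h l)) (x (h (Suc l))) = d (c l)" if "l < k" for l
    unfolding d_def
  proof (rule top_diff_bit_at_peak)
    show "strict_mono_on {h l..h (Suc l)} x"
      by (rule monotone_on_subset[OF x(1)]) (use gaps[OF that] in auto)
    show "top_diff_bit (x i) (x (Suc i)) \<le> top_diff_bit (x (c l)) (x (Suc (c l)))"
      if "h l \<le> i" "i < h (Suc l)" for i
      using sep \<open>l < k\<close> that unfolding separates_peaks_def d_def by blast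
  qed (use gaps[OF that] in auto)
qed

lemma top_diff_bit_consecutive_less:
  assumes "strict_mono_on {..<r} x" "x ` {..<r} \<subseteq> {0..<2 ^ m}" "Suc i < r"
  shows "top_diff_bit (x i) (x (Suc i)) < m"
proof (rule top_diff_bit_less)
  show "x i < 2 ^ m" "x (Suc i) < 2 ^ m" using assms(2,3) by (auto simp: image_subset_iff)
  show "x i \<noteq> x (Suc i)" using strict_mono_onD[OF assms(1), of i "Suc i"] assms(3) by simp
qed

section \<open>Ramsey numbers of complete hypergraphs\<close>

definition homogeneous :: "(nat set \<Rightarrow> bool) \<Rightarrow> nat \<Rightarrow> nat set \<Rightarrow> bool" where
  "homogeneous \<chi> k S \<longleftrightarrow> (\<exists>b. \<forall>e. e \<subseteq> S \<and> card e = k \<longrightarrow> \<chi> e = b)"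

definition below_ramsey :: "nat \<Rightarrow> nat \<Rightarrow> nat \<Rightarrow> bool" where
  "below_ramsey k n m \<longleftrightarrow> (\<exists>\<chi>. \<forall>S \<subseteq> {0..<m}. card S = n \<longrightarrow> \<not> homogeneous \<chi> k S)"

lemma has_mono_copy_mono:
  assumes "has_mono_copy n' E' N \<chi>" "n \<le> n'" "E \<subseteq> E'"
  shows "has_mono_copy n E N \<chi>"
proof -
  have "{0..<n} \<subseteq> {0..<n'}" using assms(2) by auto
  then show ?thesis
    using assms(1,3) unfolding has_mono_copy_def
      by (meson image_mono inj_on_subset order_trans subsetD)
qed

lemma has_mono_copy_complete_iff:
  "has_mono_copy n (complete_kgraph k n) N \<chi> \<longleftrightarrow> (\<exists>S \<subseteq> {0..<N}. card S = n \<and> homogeneous \<chi> k S)"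
proof
  assume "has_mono_copy n (complete_kgraph k n) N \<chi>"
  then obtain \<phi> where \<phi>: "inj_on \<phi> {0..<n}" "\<phi> ` {0..<n} \<subseteq> {0..<N}"
    and "(\<forall>e \<in> complete_kgraph k n. \<chi> (\<phi> ` e)) \<or> (\<forall>e \<in> complete_kgraph k n. \<not> \<chi> (\<phi> ` e))"
    unfolding has_mono_copy_def by blast
  then obtain b where colour: "\<And>e. e \<in> complete_kgraph k n \<Longrightarrow> \<chi> (\<phi> ` e) = b"
    by (smt (verit))
  have "\<chi> e = b" if "e \<subseteq> \<phi> ` {0..<n}" "card e = k" for e
  proof -
    define e' where "e' = {i \<in> {0..<n}. \<phi> i \<in> e}"
    have "e' \<subseteq> {0..<n}" "\<phi> ` e' = e" using that(1) unfolding e'_def by auto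
    moreover have "card e' = k"
      using card_image[OF inj_on_subset[OF \<phi>(1) \<open>e' \<subseteq> {0..<n}\<close>]] that(2) \<open>\<phi> ` e' = e\<close> by simp
    ultimately show ?thesis
      using colour[of e'] unfolding complete_kgraph_def by auto
  qed
  then have "homogeneous \<chi> k (\<phi> ` {0..<n})" unfolding homogeneous_def by (intro exI[of _ b]) simp
  moreover have "card (\<phi> ` {0..<n}) = n" using card_image[OF \<phi>(1)] by simp
  ultimately show "\<exists>S \<subseteq> {0..<N}. card S = n \<and> homogeneous \<chi> k S" using \<phi>(2) by blast
next
  assume "\<exists>S \<subseteq> {0..<N}. card S = n \<and> homogeneous \<chi> k S"
  then obtain S b where S: "S \<subseteq> {0..<N}" "card S = n"
    and colour: "\<And>e. e \<subseteq> S \<Longrightarrow> card e = k \<Longrightarrow> \<chi> e = b"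
    unfolding homogeneous_def by auto
  obtain \<phi> where \<phi>: "inj_on \<phi> {0..<n}" "\<phi> ` {0..<n} = S"
    using ex_bij_betw_nat_finite[of S] S finite_subset unfolding bij_betw_def by fastforce
  have "\<chi> (\<phi> ` e) = b" if "e \<in> complete_kgraph k n" for e
  proof (rule colour)
    have "e \<subseteq> {0..<n}" "card e = k" using that by (auto simp: complete_kgraph_def)
    then show "\<phi> ` e \<subseteq> S" "card (\<phi> ` e) = k"
      using \<phi> card_image[OF inj_on_subset[OF \<phi>(1)]] by auto
  qed
  then have "(\<forall>e \<in> complete_kgraph k n. \<chi> (\<phi> ` e)) \<or> (\<forall>e \<in> complete_kgraph k n. \<not> \<chi> (\<phi> ` e))"
    by (cases b) simp_all
  then show "has_mono_copy n (complete_kgraph k n) N \<chi>"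
    using \<phi> S(1) unfolding has_mono_copy_def by blast
qed

lemma homogeneous_set_exists: "\<exists>N. \<forall>\<chi>. \<exists>S \<subseteq> {0..<N}. card S = n \<and> homogeneous \<chi> k S"
proof -
  obtain N :: nat where N: "partn_lst {..<N} [n, n] k" using ramsey_full by blast
  have "\<exists>S \<subseteq> {0..<N}. card S = n \<and> homogeneous \<chi> k S" for \<chi>
  proof -
    define f where "f e = (if \<chi> e then 0 else 1::nat)" for e
    have "f \<in> nsets {..<N} k \<rightarrow> {..<2}" by (simp add: f_def)
    then obtain i H
      where "i < length [n, n]" "H \<in> nsets {..<N} ([n, n] ! i)" "f ` nsets H k \<subseteq> {i}"
      by (rule partn_lstE[OF N]) simp
    moreover from this(1) have "[n, n] ! i = n" by (auto simp: less_Suc_eq)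
    ultimately have H: "H \<in> nsets {..<N} n" "f ` nsets H k \<subseteq> {i}" by simp_all
    have "\<chi> e = (i = 0)" if "e \<subseteq> H" "card e = k" for e
    proof -
      have "e \<in> nsets H k"
        using that H(1) finite_subset unfolding nsets_def by auto
      then have "f e = i" using H(2) by blast
      then show ?thesis by (auto simp: f_def split: if_splits)
    qed
    moreover have "H \<subseteq> {0..<N}" "card H = n"
      using H(1) by (auto simp: nsets_def)
    ultimately show ?thesis
      unfolding homogeneous_def by (intro exI[of _ H] conjI exI[of _ "i = 0"]) simp_all
  qed
  then show ?thesis by blast
qed

lemma has_mono_copy_ramsey_number_complete:
  "has_mono_copy n (complete_kgraph k n) (ramsey_number k n (complete_kgraph k n)) \<chi>"
proof -
  have "\<exists>N. \<forall>\<chi>. has_mono_copy n (complete_kgraph k n) N \<chi>"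
    unfolding has_mono_copy_complete_iff by (rule homogeneous_set_exists)
  then have
    "\<forall>\<chi>. has_mono_copy n (complete_kgraph k n) (ramsey_number k n (complete_kgraph k n)) \<chi>"
    unfolding ramsey_number_def by (rule LeastI_ex)
  then show ?thesis ..
qed

lemma ramsey_number_complete_mono:
  assumes "n \<le> n'"
  shows "ramsey_number k n (complete_kgraph k n) \<le> ramsey_number k n' (complete_kgraph k n')"
  unfolding ramsey_number_def[of k n]
proof (rule Least_le, rule allI)
  fix \<chi>
  show "has_mono_copy n (complete_kgraph k n) (ramsey_number k n' (complete_kgraph k n')) \<chi>"
    by (rule has_mono_copy_mono[OF has_mono_copy_ramsey_number_complete])
      (use assms in \<open>auto simp: complete_kgraph_def\<close>)
qed

lemma le_ramsey_number_complete: "n \<le> ramsey_number k n (complete_kgraph k n)"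
proof -
  obtain S where S: "S \<subseteq> {0..<ramsey_number k n (complete_kgraph k n)}" "card S = n"
    using has_mono_copy_ramsey_number_complete[of n k undefined]
    unfolding has_mono_copy_complete_iff by blast
  then show ?thesis using card_mono[OF finite_atLeastLessThan S(1)] by simp
qed

lemma below_ramsey_imp_less_ramsey_number:
  assumes "below_ramsey k n m"
  shows "m < ramsey_number k n (complete_kgraph k n)"
proof (rule ccontr)
  assume "\<not> m < ramsey_number k n (complete_kgraph k n)"
  from assms obtain \<chi> where \<chi>: "\<forall>S \<subseteq> {0..<m}. card S = n \<longrightarrow> \<not> homogeneous \<chi> k S"
    unfolding below_ramsey_def ..
  obtain S where S: "S \<subseteq> {0..<ramsey_number k n (complete_kgraph k n)}" "card S = n"
    "homogeneous \<chi> k S"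
    using has_mono_copy_ramsey_number_complete[of n k \<chi>]
    unfolding has_mono_copy_complete_iff by blast
  moreover have "S \<subseteq> {0..<m}"
    using S(1) \<open>\<not> m < ramsey_number k n (complete_kgraph k n)\<close> by auto
  ultimately show False using \<chi> by simp
qed

section \<open>Lower bounds for Ramsey numbers\<close>

lemma below_ramsey_trivial:
  assumes "m < n"
  shows "below_ramsey k n m"
proof -
  have "card S \<noteq> n" if "S \<subseteq> {0..<m}" for S
    using card_mono[OF finite_atLeastLessThan that] assms by simp
  then show ?thesis unfolding below_ramsey_def by blast
qed

definition colourings_constant_on :: "nat \<Rightarrow> nat \<Rightarrow> nat set \<Rightarrow> bool \<Rightarrow> (nat set \<Rightarrow> bool) set" where
  "colourings_constant_on N k S b =
    PiE (nsets {0..<N} k) (\<lambda>e. if e \<in> nsets S k then {b} else UNIV)"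

lemma card_colourings_constant_on:
  assumes "S \<subseteq> {0..<N}" "card S = n"
  shows "card (colourings_constant_on N k S b) = 2 ^ ((N choose k) - (n choose k))"
proof -
  let ?A = "nsets {0..<N} k" and ?B = "nsets S k"
  have "finite ?A" "?B \<subseteq> ?A" using assms(1) by (simp_all add: finite_imp_finite_nsets nsets_mono)
  have "card (colourings_constant_on N k S b) = (\<Prod>e \<in> ?A. if e \<in> ?B then 1 else 2)"
    unfolding colourings_constant_on_def
    using \<open>finite ?A\<close> by (simp add: card_PiE if_distrib cong: if_cong)
  also have "\<dots> = 2 ^ card (?A - ?B)"
    using \<open>finite ?A\<close> \<open>?B \<subseteq> ?A\<close> by (simp add: prod.If_cases Int_absorb2 Diff_eq)
  also have "card (?A - ?B) = (N choose k) - (n choose k)"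
    using \<open>finite ?A\<close> \<open>?B \<subseteq> ?A\<close> assms finite_subset[OF assms(1)]
    by (simp add: card_Diff_subset finite_subset)
  finally show ?thesis .
qed

lemma mem_colourings_constant_on:
  assumes "\<chi> \<in> PiE (nsets {0..<N} k) (\<lambda>_. UNIV)" "\<forall>e. e \<subseteq> S \<and> card e = k \<longrightarrow> \<chi> e = b"
  shows "\<chi> \<in> colourings_constant_on N k S b"
  unfolding colourings_constant_on_def
proof (rule PiE_I)
  show "\<chi> e \<in> (if e \<in> nsets S k then {b} else UNIV)" for e
    using assms(2) by (simp add: nsets_def)
  show "\<chi> e = undefined" if "e \<notin> nsets {0..<N} k" for e
    using assms(1) that by (simp add: PiE_iff extensional_def)
qed

lemma below_ramsey_by_counting:
  assumes "n \<le> N" "2 * (N choose n) < 2 ^ (n choose k)"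
  shows "below_ramsey k n N"
proof -
  define Bad where "Bad = (\<Union>S \<in> nsets {0..<N} n. \<Union>b. colourings_constant_on N k S b)"
  have "finite Bad"
    unfolding Bad_def colourings_constant_on_def
    by (intro finite_UN_I finite_PiE) (auto simp: finite_imp_finite_nsets)
  have "card Bad \<le> (\<Sum>S \<in> nsets {0..<N} n. card (\<Union>b. colourings_constant_on N k S b))"
    unfolding Bad_def by (rule card_UN_le) (simp add: finite_imp_finite_nsets)
  also have "\<dots> \<le> (\<Sum>S \<in> nsets {0..<N} n. \<Sum>b \<in> UNIV. card (colourings_constant_on N k S b))"
    by (intro sum_mono card_UN_le) simp
  also have "\<dots> = (\<Sum>S \<in> nsets {0..<N} n. 2 * 2 ^ ((N choose k) - (n choose k)))"
    by (intro sum.cong) (simp_all add: card_colourings_constant_on nsets_def UNIV_bool)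
  also have "\<dots> = (N choose n) * (2 * 2 ^ ((N choose k) - (n choose k)))"
    by simp
  also have "\<dots> < 2 ^ (n choose k) * 2 ^ ((N choose k) - (n choose k))"
    using assms(2) by simp
  also have "\<dots> = card (PiE (nsets {0..<N} k) (\<lambda>_. UNIV :: bool set))"
    using binomial_right_mono[OF assms(1)]
      by (simp add: card_PiE finite_imp_finite_nsets flip: power_add)
  finally have "\<not> PiE (nsets {0..<N} k) (\<lambda>_. UNIV) \<subseteq> Bad"
    using card_mono[OF \<open>finite Bad\<close>] leD by blast
  then obtain \<chi> where \<chi>: "\<chi> \<in> PiE (nsets {0..<N} k) (\<lambda>_. UNIV)" "\<chi> \<notin> Bad"
    by blast
  have "\<not> homogeneous \<chi> k S" if "S \<subseteq> {0..<N}" "card S = n" for S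
  proof
    assume "homogeneous \<chi> k S"
    then obtain b where "\<forall>e. e \<subseteq> S \<and> card e = k \<longrightarrow> \<chi> e = b"
      unfolding homogeneous_def ..
    with \<chi>(1) have "\<chi> \<in> colourings_constant_on N k S b"
      by (rule mem_colourings_constant_on)
    moreover have "S \<in> nsets {0..<N} n"
      using that finite_subset unfolding nsets_def by auto
    ultimately have "\<chi> \<in> Bad" unfolding Bad_def by (intro UN_I[of S] UN_I[of b]) simp_all
    with \<chi>(2) show False ..
  qed
  then show ?thesis unfolding below_ramsey_def by blast
qed

lemma below_ramsey_exp:
  assumes "1 \<le> t"
  shows "below_ramsey 2 (4 * t) (2 ^ t)"
proof (cases "4 * t \<le> 2 ^ t")
  case True
  have "2 * (2 ^ t choose (4 * t)) \<le> 2 * (2 ^ t) ^ (4 * t)"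
    using binomial_le_pow[OF True] by simp
  also have "\<dots> = 2 ^ (1 + 4 * t * t)"
    by (simp flip: power_mult add: mult.commute)
  also have "\<dots> < 2 ^ (4 * t choose 2)"
  proof (rule power_strict_increasing)
    show "1 + 4 * t * t < 4 * t choose 2"
      using assms by (cases t) (simp_all add: choose_two algebra_simps)
  qed simp
  finally show ?thesis by (rule below_ramsey_by_counting[OF True])
next
  case False
  then show ?thesis by (intro below_ramsey_trivial) simp
qed

lemma below_ramsey_Suc:
  assumes "below_ramsey k n m"
  shows "below_ramsey (Suc k) (Suc n) m"
proof -
  obtain \<chi> where \<chi>: "\<forall>S \<subseteq> {0..<m}. card S = n \<longrightarrow> \<not> homogeneous \<chi> k S"
    using assms unfolding below_ramsey_def ..
  define \<chi>' where "\<chi>' e = \<chi> (e - {Max e})" for e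
  have "\<not> homogeneous \<chi>' (Suc k) S" if S: "S \<subseteq> {0..<m}" "card S = Suc n" for S
  proof
    assume "homogeneous \<chi>' (Suc k) S"
    then obtain b where colour: "\<forall>e. e \<subseteq> S \<and> card e = Suc k \<longrightarrow> \<chi>' e = b"
      unfolding homogeneous_def ..
    have "finite S" "S \<noteq> {}" using S finite_subset by auto
    have "\<chi> e = b" if e: "e \<subseteq> S - {Max S}" "card e = k" for e
    proof -
      have "finite e" "Max S \<notin> e" using e \<open>finite S\<close> finite_subset by auto
      have "Max (insert (Max S) e) = Max S"
        using e \<open>finite S\<close> \<open>finite e\<close> by (intro Max_insert2) auto
      then have "\<chi>' (insert (Max S) e) = \<chi> e"
        using \<open>Max S \<notin> e\<close> unfolding \<chi>'_def by simp
      moreover have "insert (Max S) e \<subseteq> S" "card (insert (Max S) e) = Suc k"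
        using e \<open>finite e\<close> \<open>Max S \<notin> e\<close> Max_in[OF \<open>finite S\<close> \<open>S \<noteq> {}\<close>] by auto
      then have "\<chi>' (insert (Max S) e) = b" using colour by simp
      ultimately show ?thesis by simp
    qed
    then have "homogeneous \<chi> k (S - {Max S})"
      unfolding homogeneous_def by (intro exI[of _ b]) simp
    moreover have "S - {Max S} \<subseteq> {0..<m}" "card (S - {Max S}) = n"
      using S \<open>finite S\<close> \<open>S \<noteq> {}\<close> by auto
    ultimately show False using \<chi> by simp
  qed
  then show ?thesis unfolding below_ramsey_def by blast
qed

lemma below_ramsey_add: "below_ramsey k n m \<Longrightarrow> below_ramsey (k + j) (n + j) m"
  by (induction j) (simp_all add: below_ramsey_Suc)

text \<open>The Erdos-Hajnal colouring: a \<open>(k + 1)\<close>-set \<open>x\<^sub>0 < \<dots> < x\<^sub>k\<close> with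
  \<open>D l = \<delta>(x\<^sub>l, x\<^sub>l\<^sub>+\<^sub>1)\<close> gets the colour of \<open>{D 0, \<dots>, D (k - 1)}\<close> if \<open>D\<close> is monotone,
  and otherwise records whether \<open>D\<close> ascends at its start.\<close>

definition delta_colour :: "(nat set \<Rightarrow> bool) \<Rightarrow> nat \<Rightarrow> (nat \<Rightarrow> nat) \<Rightarrow> bool" where
  "delta_colour \<chi> k D = (if strictly_monotone_on {..<k} D then \<chi> (D ` {..<k}) else D 0 < D 1)"

definition stepping_up_colouring :: "(nat set \<Rightarrow> bool) \<Rightarrow> nat \<Rightarrow> nat set \<Rightarrow> bool" where
  "stepping_up_colouring \<chi> k e =
     delta_colour \<chi> k (\<lambda>l. top_diff_bit (nth_least e l) (nth_least e (Suc l)))"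

lemma delta_colour_cong:
  assumes "\<And>l. l < k \<Longrightarrow> D l = D' l" "2 \<le> k"
  shows "delta_colour \<chi> k D = delta_colour \<chi> k D'"
proof -
  have "strictly_monotone_on {..<k} D \<longleftrightarrow> strictly_monotone_on {..<k} D'"
    using assms(1) by (simp add: strictly_monotone_on_def monotone_on_def)
  moreover have "D ` {..<k} = D' ` {..<k}" using assms(1) by simp
  moreover have "D 0 = D' 0" "D 1 = D' 1" using assms by simp_all
  ultimately show ?thesis by (simp add: delta_colour_def)
qed

lemma stepping_up_colouring_image:
  assumes "strict_mono_on {..<Suc k} h" "2 \<le> k"
  shows "stepping_up_colouring \<chi> k (h ` {..<Suc k}) =
    delta_colour \<chi> k (\<lambda>l. top_diff_bit (h l) (h (Suc l)))"
  unfolding stepping_up_colouring_def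
  by (rule delta_colour_cong) (simp_all add: nth_least_image[OF assms(1)] assms(2))

lemma stepping_up_colour_of_vertices:
  assumes b: "\<forall>e. e \<subseteq> S \<and> card e = Suc k \<longrightarrow> stepping_up_colouring \<chi> k e = b"
    and x: "strict_mono_on {..<r} x" "x ` {..<r} = S" and "2 \<le> k"
    and h: "strict_mono_on {..<Suc k} h" "h ` {..<Suc k} \<subseteq> {..<r}"
  shows "delta_colour \<chi> k (\<lambda>l. top_diff_bit (x (h l)) (x (h (Suc l)))) = b"
proof -
  have xh: "strict_mono_on {..<Suc k} (x \<circ> h)"
    using x(1) h by (rule monotone_on_o)
  have "(x \<circ> h) ` {..<Suc k} \<subseteq> S" "card ((x \<circ> h) ` {..<Suc k}) = Suc k"
    using h(2) x(2) card_image[OF strict_mono_on_imp_inj_on[OF xh]] by auto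
  then have "stepping_up_colouring \<chi> k ((x \<circ> h) ` {..<Suc k}) = b" using b by simp
  then show ?thesis using stepping_up_colouring_image[OF xh] \<open>2 \<le> k\<close> by simp
qed

lemma long_delta_run:
  fixes x :: "nat \<Rightarrow> nat"
  defines "d \<equiv> \<lambda>i. top_diff_bit (x i) (x (Suc i))"
  assumes x: "strict_mono_on {..<r} x" and "3 \<le> k" "3 \<le> n" "r = 2 * n + k - 4"
    and colour: "\<And>h. strict_mono_on {..<Suc k} h \<Longrightarrow> h ` {..<Suc k} \<subseteq> {..<r} \<Longrightarrow>
        delta_colour \<chi> k (\<lambda>l. top_diff_bit (x (h l)) (x (h (Suc l)))) = b"
  shows "\<exists>p. p + n < r \<and> strictly_monotone_on {p..<p + n} d"
proof -
  have "\<exists>p. p + n \<le> r - 1 \<and> strictly_monotone_on {p..<p + n} d"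
  proof (rule long_monotone_run[where w = k and b = b])
    show "d i \<noteq> d (Suc i)" if "Suc i < r - 1" for i
      using that strict_mono_onD[OF x] unfolding d_def by (intro top_diff_bit_neq) auto
    show "strictly_monotone_on {j..<j + k} d \<or> (d j < d (Suc j) \<longleftrightarrow> b)" if "j + k \<le> r - 1" for j
    proof -
      have "(\<lambda>l. j + l) ` {..<Suc k} \<subseteq> {..<r}" using that \<open>3 \<le> k\<close> by auto
      then have "delta_colour \<chi> k (\<lambda>l. d (j + l)) = b"
        using colour[of "\<lambda>l. j + l"] by (simp add: d_def strict_mono_on_def)
      then show ?thesis
        unfolding delta_colour_def strictly_monotone_on_def monotone_on_shift
        by (auto split: if_splits)
    qed
  qed (use assms(3-5) in simp_all)
  then obtain p where "p + n \<le> r - 1" "strictly_monotone_on {p..<p + n} d" by blast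
  moreover have "r - 1 < r" using assms(3-5) by simp
  ultimately show ?thesis by (intro exI[of _ p]) simp
qed

lemma increasing_run_separates_peaks:
  fixes d :: "nat \<Rightarrow> 'a::linorder" and j :: "nat \<Rightarrow> nat"
  assumes run: "strict_mono_on {p..<q} d"
    and j: "strict_mono_on {..<k} j" "j ` {..<k} \<subseteq> {p..<q}"
  shows "separates_peaks k q d j (\<lambda>l. if l = 0 then j 0 else Suc (j (l - 1)))"
proof -
  define h where "h l = (if l = 0 then j 0 else Suc (j (l - 1)))" for l
  have jl: "p \<le> j l \<and> j l < q" if "l < k" for l using j(2) that by auto
  have h_le: "h l \<le> j l \<and> p \<le> h l" if "l < k" for l
  proof (cases l)
    case 0
    then show ?thesis using jl[OF that] by (simp add: h_def)
  next
    case (Suc l')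
    then show ?thesis using jl[of l'] strict_mono_onD[OF j(1), of l' l] that by (simp add: h_def)
  qed
  have "d i \<le> d (j l)" if "l < k" "h l \<le> i" "i < h (Suc l)" for l i
  proof (cases "i = j l")
    case False
    then have "d i < d (j l)"
      using jl[OF that(1)] h_le[OF that(1)] that
        by (intro strict_mono_onD[OF run]) (auto simp: h_def)
    then show ?thesis by simp
  qed simp
  with h_le jl show ?thesis
    unfolding separates_peaks_def h_def[symmetric] by (simp add: h_def Suc_le_eq)
qed

lemma decreasing_run_separates_peaks:
  fixes d :: "nat \<Rightarrow> 'a::linorder" and j :: "nat \<Rightarrow> nat"
  assumes run: "strict_antimono_on {p..<q} d"
    and j: "strict_mono_on {..<k} j" "j ` {..<k} \<subseteq> {p..<q}"
  shows "separates_peaks k q d j (\<lambda>l. if l < k then j l else Suc (j (k - 1)))"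
proof -
  define h where "h l = (if l < k then j l else Suc (j (k - 1)))" for l
  have jl: "p \<le> j l \<and> j l < q" if "l < k" for l using j(2) that by auto
  have h_Suc: "j l < h (Suc l) \<and> h (Suc l) \<le> q" if "l < k" for l
  proof (cases "Suc l < k")
    case True
    then show ?thesis using jl[OF True] strict_mono_onD[OF j(1), of l "Suc l"]
      by (simp add: h_def)
  next
    case False
    then have "k - 1 = l" using that by simp
    then show ?thesis using jl[OF that] False by (simp add: h_def)
  qed
  have "d i \<le> d (j l)" if "l < k" "h l \<le> i" "i < h (Suc l)" for l i
  proof (cases "i = j l")
    case False
    then have "d i < d (j l)"
      using jl[OF that(1)] h_Suc[OF that(1)] that
        by (intro monotone_onD[OF run]) (auto simp: h_def)
    then show ?thesis by simp
  qed simp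
  with h_Suc show ?thesis
    unfolding separates_peaks_def h_def[symmetric] by (auto simp: h_def)
qed

lemma run_vertices:
  fixes x j :: "nat \<Rightarrow> nat"
  defines "d \<equiv> \<lambda>i. top_diff_bit (x i) (x (Suc i))"
  assumes x: "strict_mono_on {..<r} x" "q < r"
    and run: "strictly_monotone_on {p..<q} d"
    and j: "strict_mono_on {..<k} j" "j ` {..<k} \<subseteq> {p..<q}" "0 < k"
  obtains h where "strict_mono_on {..<Suc k} h" "h ` {..<Suc k} \<subseteq> {..<r}"
    "\<And>l. l < k \<Longrightarrow> top_diff_bit (x (h l)) (x (h (Suc l))) = top_diff_bit (x (j l)) (x (Suc (j l)))"
proof -
  from run consider "strict_mono_on {p..<q} d" | "strict_antimono_on {p..<q} d"
    unfolding strictly_monotone_on_def by blast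
  then obtain h where "separates_peaks k q d j h"
    using increasing_run_separates_peaks[OF _ j(1,2)] decreasing_run_separates_peaks[OF _ j(1,2)]
    by metis
  from top_diff_bit_separated_peaks[OF x \<open>0 < k\<close> this[unfolded d_def]]
  show ?thesis by (rule that)
qed

lemma homogeneous_delta_run:
  fixes x :: "nat \<Rightarrow> nat"
  defines "d \<equiv> \<lambda>i. top_diff_bit (x i) (x (Suc i))"
  assumes x: "strict_mono_on {..<r} x" "q < r"
    and run: "strictly_monotone_on {p..<q} d" and "2 \<le> k"
    and colour: "\<And>h. strict_mono_on {..<Suc k} h \<Longrightarrow> h ` {..<Suc k} \<subseteq> {..<r} \<Longrightarrow>
        delta_colour \<chi> k (\<lambda>l. top_diff_bit (x (h l)) (x (h (Suc l)))) = b"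
  shows "homogeneous \<chi> k (d ` {p..<q})"
  unfolding homogeneous_def
proof (intro exI[of _ b] allI impI)
  fix U assume U: "U \<subseteq> d ` {p..<q} \<and> card U = k"
  define J where "J = {i \<in> {p..<q}. d i \<in> U}"
  have "J \<subseteq> {p..<q}" "d ` J = U" using U by (auto simp: J_def)
  then have "finite J" "card J = k"
    using U card_image[OF inj_on_subset[OF strictly_monotone_on_imp_inj_on[OF run]]]
    by (auto intro: finite_subset)
  define j where "j = nth_least J"
  have j: "strict_mono_on {..<k} j" "j ` {..<k} = J"
    using nth_least_strict_mono_on[OF \<open>finite J\<close>] image_nth_least[OF \<open>finite J\<close>]
    by (simp_all add: j_def \<open>card J = k\<close>)
  obtain h where h: "strict_mono_on {..<Suc k} h" "h ` {..<Suc k} \<subseteq> {..<r}"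
    "\<And>l. l < k \<Longrightarrow> top_diff_bit (x (h l)) (x (h (Suc l))) = d (j l)"
    using run_vertices[OF x run[unfolded d_def] j(1)] j(2) \<open>J \<subseteq> {p..<q}\<close> \<open>2 \<le> k\<close>
    unfolding d_def by auto
  have "strictly_monotone_on {..<k} (d \<circ> j)"
    using run j \<open>J \<subseteq> {p..<q}\<close> by (intro strictly_monotone_on_comp) auto
  have "b = delta_colour \<chi> k (\<lambda>l. top_diff_bit (x (h l)) (x (h (Suc l))))"
    using colour[OF h(1,2)] by simp
  also have "\<dots> = delta_colour \<chi> k (d \<circ> j)"
    using h(3) \<open>2 \<le> k\<close> by (intro delta_colour_cong) simp_all
  also have "\<dots> = \<chi> ((d \<circ> j) ` {..<k})"
    using \<open>strictly_monotone_on {..<k} (d \<circ> j)\<close> by (simp add: delta_colour_def)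
  also have "(d \<circ> j) ` {..<k} = U"
    using j(2) \<open>d ` J = U\<close> image_comp[of d j "{..<k}"] by simp
  finally show "\<chi> U = b" by simp
qed

lemma below_ramsey_stepping_up:
  assumes "below_ramsey k n m" "3 \<le> k" "3 \<le> n"
  shows "below_ramsey (Suc k) (2 * n + k - 4) (2 ^ m)"
proof -
  define r where "r = 2 * n + k - 4"
  obtain \<chi> where \<chi>: "\<forall>S \<subseteq> {0..<m}. card S = n \<longrightarrow> \<not> homogeneous \<chi> k S"
    using assms(1) unfolding below_ramsey_def ..
  have "\<not> homogeneous (stepping_up_colouring \<chi> k) (Suc k) S"
    if S: "S \<subseteq> {0..<2 ^ m}" "card S = r" for S
  proof
    assume "homogeneous (stepping_up_colouring \<chi> k) (Suc k) S"
    then obtain b where b: "\<forall>e. e \<subseteq> S \<and> card e = Suc k \<longrightarrow> stepping_up_colouring \<chi> k e = b"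
      unfolding homogeneous_def ..
    define x where "x = nth_least S"
    define d where "d = (\<lambda>i. top_diff_bit (x i) (x (Suc i)))"
    have "finite S" using S(1) finite_subset by blast
    then have x: "strict_mono_on {..<r} x" "x ` {..<r} = S"
      using nth_least_strict_mono_on[OF \<open>finite S\<close>] image_nth_least[OF \<open>finite S\<close>]
      by (simp_all add: x_def S(2))
    have colour: "delta_colour \<chi> k (\<lambda>l. top_diff_bit (x (h l)) (x (h (Suc l)))) = b"
      if "strict_mono_on {..<Suc k} h" "h ` {..<Suc k} \<subseteq> {..<r}" for h
      using stepping_up_colour_of_vertices[OF b x _ that] assms(2) by simp
    obtain p where p: "p + n < r" "strictly_monotone_on {p..<p + n} d"
      using long_delta_run[OF x(1) assms(2,3) r_def colour] unfolding d_def by blast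
    have "homogeneous \<chi> k (d ` {p..<p + n})"
      unfolding d_def
      by (rule homogeneous_delta_run[OF x(1) p(1) p(2)[unfolded d_def] _ colour])
        (use assms(2) in simp)
    moreover have "d ` {p..<p + n} \<subseteq> {0..<m}"
    proof
      fix v assume "v \<in> d ` {p..<p + n}"
      then obtain i where "i \<in> {p..<p + n}" "v = d i" by blast
      then show "v \<in> {0..<m}"
        using top_diff_bit_consecutive_less[OF x(1), of m i] x(2) S(1) p(1)
        unfolding d_def by auto
    qed
    moreover have "card (d ` {p..<p + n}) = n"
      using card_image[OF strictly_monotone_on_imp_inj_on[OF p(2)]] by simp
    ultimately show False using \<chi> by simp
  qed
  then show ?thesis unfolding below_ramsey_def r_def by blast
qed

lemma below_ramsey_tower:
  assumes "1 \<le> t" "5 \<le> k"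
  shows "below_ramsey k (16 * t + k - 3) (2 ^ 2 ^ 2 ^ t)"
proof -
  have "below_ramsey 3 (4 * t + 1) (2 ^ t)"
    using below_ramsey_Suc[OF below_ramsey_exp[OF assms(1)]] by (simp add: numeral_3_eq_3)
  moreover have "2 * (4 * t + 1) + 3 - 4 = 8 * t + 1" "2 * (8 * t + 1) + 4 - 4 = 16 * t + 2"
    "Suc 3 = 4" "Suc 4 = 5"
    by simp_all
  ultimately have "below_ramsey 4 (8 * t + 1) (2 ^ 2 ^ t)"
    using below_ramsey_stepping_up[of 3 "4 * t + 1" "2 ^ t"] assms(1) by simp
  then have "below_ramsey 5 (16 * t + 2) (2 ^ 2 ^ 2 ^ t)"
    using below_ramsey_stepping_up[of 4 "8 * t + 1" "2 ^ 2 ^ t"] assms(1) \<open>Suc 4 = 5\<close>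
      \<open>2 * (8 * t + 1) + 4 - 4 = 16 * t + 2\<close>
    by simp
  then have "below_ramsey (5 + j) (16 * t + 2 + j) (2 ^ 2 ^ 2 ^ t)" for j
    by (rule below_ramsey_add)
  moreover obtain j where "k = 5 + j" using le_Suc_ex[OF assms(2)] by blast
  moreover have "16 * t + (5 + j) - 3 = 16 * t + 2 + j" by simp
  ultimately show ?thesis by simp
qed

lemma power_le_tower:
  fixes Q C t :: nat
  assumes "1 \<le> Q" "Q + C + 3 \<le> 2 ^ t"
  shows "Q ^ (2 * 2 ^ C + 3) \<le> 2 ^ 2 ^ 2 ^ t"
proof -
  have "Q ^ (2 * 2 ^ C + 3) \<le> Q ^ 2 ^ (C + 3)"
    using assms(1) one_le_power[of 2 C] by (intro power_increasing) (simp_all add: power_add)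
  also have "\<dots> \<le> (2 ^ Q) ^ 2 ^ (C + 3)"
    by (intro power_mono) (simp_all add: less_imp_le)
  also have "\<dots> = 2 ^ (Q * 2 ^ (C + 3))"
    by (simp flip: power_mult)
  also have "\<dots> \<le> 2 ^ 2 ^ (Q + C + 3)"
    by (intro power_increasing) (simp_all add: power_add less_imp_le)
  also have "\<dots> \<le> 2 ^ 2 ^ 2 ^ t"
    using assms(2) by (intro power_increasing) simp_all
  finally show ?thesis .
qed

lemma ramsey_number_complete_huge:
  assumes "5 \<le> k"
  shows "\<exists>n > m.
    (a + n) * L ^ (2 * 2 ^ (n choose k) + 2) < ramsey_number k n (complete_kgraph k n)"
proof -
  have "eventually (\<lambda>t. real (a + L + (16 * t + k) + (16 * t + k) ^ k + 3) \<le> 2 ^ t) at_top"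
    by real_asymp
  then have "eventually (\<lambda>t. a + L + (16 * t + k) + (16 * t + k) ^ k + 3 \<le> (2::nat) ^ t) at_top"
    by (rule eventually_mono) (metis of_nat_le_iff of_nat_numeral of_nat_power)
  then obtain T where T: "\<And>t. T \<le> t \<Longrightarrow> a + L + (16 * t + k) + (16 * t + k) ^ k + 3 \<le> 2 ^ t"
    unfolding eventually_sequentially by blast
  define t where "t = max T (Suc m)"
  have t: "m < t" "a + L + (16 * t + k) + (16 * t + k) ^ k + 3 \<le> 2 ^ t"
    using T[of t] by (simp_all add: t_def)
  define n where "n = 16 * t + k - 3"
  define Q where "Q = a + L + n"
  have n: "m < n" "k \<le> n" "n \<le> 16 * t + k" using t(1) unfolding n_def by auto
  have "n choose k \<le> (16 * t + k) ^ k"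
    using binomial_le_pow[OF n(2)] power_mono[OF n(3), of k] by linarith
  then have "Q + (n choose k) + 3 \<le> 2 ^ t" using t(2) n(3) unfolding Q_def by linarith
  have "(a + n) * L ^ (2 * 2 ^ (n choose k) + 2) \<le> Q * Q ^ (2 * 2 ^ (n choose k) + 2)"
    unfolding Q_def by (intro mult_le_mono power_mono) simp_all
  also have "\<dots> = Q ^ (2 * 2 ^ (n choose k) + 3)"
    unfolding numeral_2_eq_2 numeral_3_eq_3 by simp
  also have "\<dots> \<le> 2 ^ 2 ^ 2 ^ t"
    using \<open>Q + (n choose k) + 3 \<le> 2 ^ t\<close> n(2) assms unfolding Q_def
      by (intro power_le_tower) simp_all
  also have "\<dots> < ramsey_number k n (complete_kgraph k n)"
    unfolding n_def using t(1) assms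
    by (intro below_ramsey_imp_less_ramsey_number below_ramsey_tower) simp_all
  finally show ?thesis using n(1) by blast
qed

section \<open>Gaps between Ramsey numbers\<close>

lemma geometric_interval_avoiding:
  fixes V :: "nat set"
  assumes "finite V" "card V \<le> s" "1 \<le> L"
  shows "\<exists>i \<le> s. \<forall>v \<in> V. v < a * L ^ (2 * i) \<or> a * L ^ (2 * i + 2) \<le> v"
proof (rule ccontr)
  assume "\<not> ?thesis"
  then have "\<forall>i \<in> {..s}. \<exists>v. v \<in> V \<and> a * L ^ (2 * i) \<le> v \<and> v < a * L ^ (2 * i + 2)"
    by (metis atMost_iff not_le)
  then have "\<exists>w. \<forall>i \<in> {..s}. w i \<in> V \<and> a * L ^ (2 * i) \<le> w i \<and> w i < a * L ^ (2 * i + 2)"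
    by (rule bchoice)
  then obtain w where w: "\<And>i. i \<le> s \<Longrightarrow> w i \<in> V \<and> a * L ^ (2 * i) \<le> w i \<and> w i < a * L ^ (2 * i + 2)"
    by auto
  have "w i < w i'" if "i < i'" "i' \<le> s" for i i'
  proof -
    have "w i < a * L ^ (2 * i + 2)" using w[of i] that by simp
    also have "\<dots> \<le> a * L ^ (2 * i')" using that assms(3)
      by (intro mult_le_mono2 power_increasing) auto
    also have "\<dots> \<le> w i'" using w[of i'] that by simp
    finally show ?thesis .
  qed
  then have "inj_on w {..s}" by (intro strict_mono_on_imp_inj_on strict_mono_onI) auto
  moreover have "w ` {..s} \<subseteq> V" using w by auto
  ultimately have "card {..s} \<le> card V" using assms(1) by (rule card_inj_on_le)
  then show False using assms(2) by simp
qed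

lemma multiplicative_gap:
  fixes V :: "nat set"
  assumes "finite V" "card V \<le> s" "1 \<le> L" "a * L ^ (2 * s + 2) \<le> R"
  shows "\<exists>g. a \<le> g \<and> g \<le> R \<and> (\<forall>v \<in> V. v * L \<le> g \<or> g * L \<le> v)"
proof -
  obtain i where "i \<le> s" and gap: "\<And>v. v \<in> V \<Longrightarrow> v < a * L ^ (2 * i) \<or> a * L ^ (2 * i + 2) \<le> v"
    using geometric_interval_avoiding[OF assms(1-3)] by blast
  define g where "g = a * L ^ (2 * i + 1)"
  have gL: "g * L = a * L ^ (2 * i + 2)" "g = a * L ^ (2 * i) * L" by (simp_all add: g_def)
  show ?thesis
  proof (intro exI[of _ g] conjI ballI)
    show "a \<le> g" using assms(3) unfolding g_def by simp
    have "g \<le> g * L" using assms(3) by simp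
    also have "\<dots> \<le> a * L ^ (2 * s + 2)"
      unfolding gL(1) using \<open>i \<le> s\<close> assms(3) by (intro mult_le_mono2 power_increasing) auto
    finally show "g \<le> R" using assms(4) by simp
    show "v * L \<le> g \<or> g * L \<le> v" if "v \<in> V" for v
    proof (cases "v < a * L ^ (2 * i)")
      case True
      then have "v * L \<le> g" unfolding gL(2) by simp
      then show ?thesis ..
    next
      case False
      then have "g * L \<le> v" unfolding gL(1) using gap[OF that] by simp
      then show ?thesis ..
    qed
  qed
qed

lemma card_ramsey_numbers_le:
  "card ((\<lambda>E. ramsey_number k n E) ` {E. kgraph k n E}) \<le> 2 ^ (n choose k)"
proof -
  have "{E. kgraph k n E} = Pow (complete_kgraph k n)"
    by (auto simp: kgraph_def complete_kgraph_def)
  moreover have "complete_kgraph k n = nsets {0..<n} k"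
    by (auto simp: complete_kgraph_def nsets_def intro: finite_subset)
  ultimately show ?thesis
    using card_image_le[of "Pow (nsets {0..<n} k)" "\<lambda>E. ramsey_number k n E"]
    by (simp add: finite_imp_finite_nsets card_Pow)
qed

lemma ramsey_numbers_gap:
  assumes "5 \<le> k" "1 \<le> L"
  shows "\<exists>n > m. \<exists>g. a \<le> g \<and> n \<le> g \<and> g \<le> ramsey_number k n (complete_kgraph k n) \<and>
    (\<forall>E. kgraph k n E \<longrightarrow> ramsey_number k n E * L \<le> g \<or> g * L \<le> ramsey_number k n E)"
proof -
  obtain n where "m < n"
    and big: "(a + n) * L ^ (2 * 2 ^ (n choose k) + 2) < ramsey_number k n (complete_kgraph k n)"
    using ramsey_number_complete_huge[OF assms(1)] by blast
  have "finite ((\<lambda>E. ramsey_number k n E) ` {E. kgraph k n E})"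
    by (auto simp: kgraph_def intro: finite_subset[of _ "Pow (Pow {0..<n})"])
  from multiplicative_gap[OF this card_ramsey_numbers_le assms(2) less_imp_le[OF big]]
  obtain g where g: "a + n \<le> g" "g \<le> ramsey_number k n (complete_kgraph k n)"
    "\<forall>v \<in> (\<lambda>E. ramsey_number k n E) ` {E. kgraph k n E}. v * L \<le> g \<or> g * L \<le> v"
    by blast
  have "\<forall>E. kgraph k n E \<longrightarrow> ramsey_number k n E * L \<le> g \<or> g * L \<le> ramsey_number k n E"
    using g(3) by blast
  then show ?thesis using \<open>m < n\<close> g(1,2) by (intro exI[of _ n] conjI exI[of _ g]) simp_all
qed

text \<open>Step \<open>i\<close> of the sequence serves the parameter \<open>fst (prod_decode i)\<close>, so every
  parameter is served at arbitrarily large indices.\<close>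

lemma interpolating_sequence:
  fixes R :: "nat \<Rightarrow> nat" and P :: "nat \<Rightarrow> nat \<Rightarrow> nat \<Rightarrow> bool"
  assumes "\<And>j a m. \<exists>n > m. \<exists>g. a \<le> g \<and> n \<le> g \<and> g \<le> R n \<and> P j n g"
  obtains N G :: "nat \<Rightarrow> nat" where "strict_mono N" "N 0 = 0" "mono G" "\<And>i. N i \<le> G i"
    "\<And>i. G i \<le> R (N i)" "\<And>j m. \<exists>i. m < N i \<and> P j (N i) (G i)"
proof -
  define admissible where "admissible j q q' \<longleftrightarrow> fst q < fst q' \<and> snd q \<le> snd q'
    \<and> fst q' \<le> snd q' \<and> snd q' \<le> R (fst q') \<and> P j (fst q') (snd q')"
    for j and q q' :: "nat \<times> nat"
  have "\<exists>q'. admissible j q q'" for j q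
    using assms[where j = j and a = "snd q" and m = "fst q"] by (auto simp: admissible_def)
  then have step: "admissible j q (SOME q'. admissible j q q')" for j q
    by (rule someI_ex)
  define seq where "seq = rec_nat (0, 0) (\<lambda>i q. SOME q'. admissible (fst (prod_decode i)) q q')"
  have seq_Suc: "admissible (fst (prod_decode i)) (seq i) (seq (Suc i))" for i
    using step by (simp add: seq_def)
  define N where "N i = fst (seq i)" for i
  define G where "G i = snd (seq i)" for i
  have "strict_mono N"
    unfolding strict_mono_Suc_iff using seq_Suc by (simp add: N_def admissible_def)
  moreover have "N 0 = 0" by (simp add: N_def seq_def)
  moreover have "mono G"
    unfolding mono_iff_le_Suc using seq_Suc by (simp add: G_def admissible_def)
  moreover have bounds: "N i \<le> G i \<and> G i \<le> R (N i)" for i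
    using seq_Suc[of "i - 1"] by (cases i) (simp_all add: N_def G_def admissible_def seq_def)
  moreover have "\<exists>i. m < N i \<and> P j (N i) (G i)" for j m
  proof (intro exI conjI)
    let ?i = "prod_encode (j, m)"
    have "m \<le> ?i" by (rule le_prod_encode_2)
    also have "\<dots> \<le> N ?i" using \<open>strict_mono N\<close> by (rule strict_mono_imp_increasing)
    also have "\<dots> < N (Suc ?i)" using \<open>strict_mono N\<close> by (simp add: strict_mono_Suc_iff)
    finally show "m < N (Suc ?i)" .
    show "P j (N (Suc ?i)) (G (Suc ?i))"
      using seq_Suc[of ?i] by (simp add: N_def G_def admissible_def)
  qed
  ultimately show ?thesis
    using bounds by (intro that[of N G]) simp_all
qed

lemma monotone_interpolation:
  fixes N G R :: "nat \<Rightarrow> nat"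
  assumes N: "strict_mono N" "N 0 = 0" and G: "mono G" "\<And>i. N i \<le> G i" "\<And>i. G i \<le> R (N i)"
    and R: "mono R" "\<And>n. n \<le> R n"
  obtains f where "mono f" "\<And>n. n \<le> f n \<and> f n \<le> R n" "\<And>i. f (N i) = G i"
proof -
  define I where "I m = {i. N i \<le> m}" for m
  have I: "finite (I m)" "0 \<in> I m" for m
  proof -
    have "I m \<subseteq> {..m}"
      using strict_mono_imp_increasing[OF N(1)] unfolding I_def by (auto intro: order.trans)
    then show "finite (I m)" by (rule finite_subset) simp
    show "0 \<in> I m" using N(2) by (simp add: I_def)
  qed
  define f where "f m = max m (Max (G ` I m))" for m
  show ?thesis
  proof (rule that)
    show "mono f"
    proof (rule monoI)
      fix m m' :: nat assume "m \<le> m'"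
      then have "Max (G ` I m) \<le> Max (G ` I m')"
        using I by (intro Max_mono image_mono) (auto simp: I_def)
      with \<open>m \<le> m'\<close> show "f m \<le> f m'" unfolding f_def by (rule max.mono)
    qed
    show "n \<le> f n \<and> f n \<le> R n" for n
    proof -
      have "Max (G ` I n) \<in> G ` I n" using I by (intro Max_in) auto
      then obtain i where "N i \<le> n" "Max (G ` I n) = G i" by (auto simp: I_def)
      then have "Max (G ` I n) \<le> R n" using G(3)[of i] monoD[OF R(1)] by (metis order.trans)
      then show ?thesis using R(2)[of n] by (simp add: f_def)
    qed
    show "f (N i) = G i" for i
    proof -
      have "I (N i) = {..i}" using strict_mono_less_eq[OF N(1)] by (auto simp: I_def)
      moreover have "Max (G ` {..i}) = G i" using monoD[OF G(1)] by (intro Max_eqI) auto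
      ultimately show ?thesis using G(2)[of i] by (simp add: f_def)
    qed
  qed
qed

lemma real_gap:
  fixes v g L :: nat and c C :: real
  assumes "0 < c" "1 / c \<le> L" "C \<le> L" "v * L \<le> g \<or> g * L \<le> v"
  shows "real v \<le> c * real g \<or> C * real g \<le> real v"
  using assms(4)
proof
  assume "v * L \<le> g"
  have "real v \<le> real v * (c * L)"
    using assms(1,2) by (intro mult_le_cancel_left1[THEN iffD2]) (simp_all add: field_simps)
  also have "\<dots> = c * real (v * L)" by simp
  also have "\<dots> \<le> c * real g"
    using of_nat_mono[OF \<open>v * L \<le> g\<close>] by (rule mult_left_mono) (use assms(1) in simp)
  finally show ?thesis ..
next
  assume "g * L \<le> v"
  have "C * real g \<le> real L * real g" using assms(3) by (intro mult_right_mono) simp_all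
  also have "\<dots> \<le> real v" using \<open>g * L \<le> v\<close> by (simp flip: of_nat_mult add: mult.commute)
  finally show ?thesis ..
qed

theorem theorem1p2:
  fixes k :: nat
  assumes "k \<ge> 5"
  shows "\<exists>f :: nat \<Rightarrow> nat. mono f \<and>
     (\<forall>n. n \<le> f n \<and> f n \<le> ramsey_number k n (complete_kgraph k n)) \<and>
     (\<forall>c C :: real. c > 0 \<longrightarrow> C > 0 \<longrightarrow>
        (\<forall>n0. \<exists>n > n0. \<forall>E. kgraph k n E \<longrightarrow>
           real (ramsey_number k n E) \<le> c * real (f n) \<or>
           real (ramsey_number k n E) \<ge> C * real (f n)))"
proof -
  define R where "R n = ramsey_number k n (complete_kgraph k n)" for n
  define gap where "gap L n g \<longleftrightarrow>
    (\<forall>E. kgraph k n E \<longrightarrow> ramsey_number k n E * L \<le> g \<or> g * L \<le> ramsey_number k n E)" for L n g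
  have "\<exists>n > m. \<exists>g. a \<le> g \<and> n \<le> g \<and> g \<le> R n \<and> gap (Suc L) n g" for L a m
    using ramsey_numbers_gap[OF assms, of "Suc L" m a] unfolding R_def gap_def by simp
  then obtain N G :: "nat \<Rightarrow> nat" where NG: "strict_mono N" "N 0 = 0" "mono G"
    "\<And>i. N i \<le> G i" "\<And>i. G i \<le> R (N i)"
    and gaps: "\<And>L m. \<exists>i. m < N i \<and> gap (Suc L) (N i) (G i)"
    using interpolating_sequence[where P = "\<lambda>L. gap (Suc L)"] by metis
  have "mono R" by (intro monoI) (simp add: R_def ramsey_number_complete_mono)
  then obtain f where f: "mono f" "\<And>n. n \<le> f n \<and> f n \<le> R n" "\<And>i. f (N i) = G i"
    using monotone_interpolation[OF NG] le_ramsey_number_complete unfolding R_def by blast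
  have "\<exists>n > n0. \<forall>E. kgraph k n E \<longrightarrow> real (ramsey_number k n E) \<le> c * real (f n) \<or>
      C * real (f n) \<le> real (ramsey_number k n E)" if "0 < c" for c C :: real and n0
  proof -
    define L where "L = nat \<lceil>max (1 / c) C\<rceil>"
    obtain i where "n0 < N i" "gap (Suc L) (N i) (f (N i))" using gaps f(3) by metis
    moreover have "1 / c \<le> Suc L" "C \<le> Suc L" unfolding L_def by linarith+
    ultimately show ?thesis
      using real_gap[OF that] unfolding gap_def by blast
  qed
  then show ?thesis using f(1,2) unfolding R_def by auto
qed

end
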